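(* Let $(X_\lambda,x_\lambda)_{\lambda\in\Lambda}$ be a family of based, wep-connected spaces such that each $X_\lambda$ is locally path connected at $x_\lambda$ and $\{x_\lambda\}$ is closed in $X_\lambda$. Then the wedge $\bigvee_\lambda X_\lambda$ is wep-connected.
   Context: The wedge $\bigvee_\lambda X_\lambda$ is the quotient of the disjoint union $\bigsqcup_\lambda X_\lambda$ identifying all basepoints $x_\lambda$ to one point. For a space $Y$, $P(Y)$ is the space of paths $I=[0,1]\to Y$ with the compact-open topology. A path $p:I\to Y$ is well-ended (in $Y$) if for every open neighborhood $\mathcal U$ of $p$ in $P(Y)$ there are open neighborhoods $V_0,V_1$ of $p(0),p(1)$ in $Y$ such that for all $a\in V_0,b\in V_1$ there is $q\in\mathcal U$ with $q(0)=a$, $q(1)=b$. A space $Y$ is wep-connected if any two points of $Y$ are joined by a well-ended path in $Y$. *)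

theory Defs
  imports "HOL-Analysis.Analysis"
begin

definition quotient_topology :: "'a topology \<Rightarrow> ('a \<Rightarrow> 'b) \<Rightarrow> 'b topology" where
  "quotient_topology X f =
     topology (\<lambda>U. U \<subseteq> f ` topspace X \<and> openin X {x \<in> topspace X. f x \<in> U})"

definition wedge_map :: "('i \<Rightarrow> 'a) \<Rightarrow> 'i \<times> 'a \<Rightarrow> ('i \<times> 'a) option" where
  "wedge_map x = (\<lambda>(i, y). if y = x i then None else Some (i, y))"

definition wedge :: "('i \<Rightarrow> 'a topology) \<Rightarrow> ('i \<Rightarrow> 'a) \<Rightarrow> 'i set \<Rightarrow> ('i \<times> 'a) option topology" where
  "wedge X x I = quotient_topology (sum_topology X I) (wedge_map x)"

definition path_space :: "'a topology \<Rightarrow> (real \<Rightarrow> 'a) topology" where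
  "path_space Y = topology_generated_by
     {{p. pathin Y p \<and> p ` K \<subseteq> U} | K U.
        compactin (top_of_set {0..1}) K \<and> openin Y U}"

definition well_ended :: "'a topology \<Rightarrow> (real \<Rightarrow> 'a) \<Rightarrow> bool" where
  "well_ended Y p \<longleftrightarrow> pathin Y p \<and>
     (\<forall>\<U>. openin (path_space Y) \<U> \<and> p \<in> \<U> \<longrightarrow>
        (\<exists>V0 V1. openin Y V0 \<and> p 0 \<in> V0 \<and> openin Y V1 \<and> p 1 \<in> V1 \<and>
           (\<forall>a\<in>V0. \<forall>b\<in>V1. \<exists>q\<in>\<U>. q 0 = a \<and> q 1 = b)))"

definition wep_connected :: "'a topology \<Rightarrow> bool" where
  "wep_connected Y \<longleftrightarrow>
     (\<forall>a\<in>topspace Y. \<forall>b\<in>topspace Y. \<exists>p. well_ended Y p \<and> p 0 = a \<and> p 1 = b)"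

end

theory Submission
  imports Defs
begin

text \<open>
  Since every point of W is joined to the wedge point by a well-ended
  path, W is wep-connected: concatenate one such path with the reverse of another. The
  well-ended path from a point of X l to the wedge point is the image of a well-ended path in
  X l to x l, followed by the constant path at the wedge point. The image is only
  well-started (its end point can no longer be perturbed freely), the constant path is
  well-ended because W is (weakly) locally path-connected at the wedge point, and a
  well-started path followed by a well-ended path is well-ended.
\<close>

text \<open>The library versions (joinpaths, reversepath)
  require a topological type class; the wedge lives on a type without one, so we work with
  the same formulas for paths in an arbitrary topology.\<close>
definition join_path :: "(real \<Rightarrow> 'a) \<Rightarrow> (real \<Rightarrow> 'a) \<Rightarrow> real \<Rightarrow> 'a" where
  "join_path g h = (\<lambda>t. if t \<le> 1/2 then g (2 * t) else h (2 * t - 1))"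

definition reverse_path :: "(real \<Rightarrow> 'a) \<Rightarrow> real \<Rightarrow> 'a" where
  "reverse_path g = (\<lambda>t. g (1 - t))"

lemma pathin_reverse_path:
  assumes "pathin Y g"
  shows "pathin Y (reverse_path g)"
proof -
  have "continuous_map (top_of_set {0..1}) (top_of_set {0..1}) (\<lambda>t::real. 1 - t)"
    by (auto intro!: continuous_intros)
  then have "pathin Y (g \<circ> (\<lambda>t. 1 - t))"
    using assms unfolding pathin_def by (rule continuous_map_compose)
  then show ?thesis by (simp add: reverse_path_def o_def)
qed

lemma pathin_join_path:
  assumes g: "pathin Y g" and h: "pathin Y h" and gh: "g 1 = h 0"
  shows "pathin Y (join_path g h)"
proof -
  let ?I = "top_of_set {0..1::real}"
  have "continuous_map ?I Y (\<lambda>t. if t \<le> 1/2 then g (2*t) else h (2*t - 1))"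
  proof (rule continuous_map_cases_le[where p = "\<lambda>t. t" and q = "\<lambda>_. 1/2"])
    have "continuous_map (subtopology ?I {t \<in> topspace ?I. t \<le> 1/2}) ?I (\<lambda>t. 2*t)"
      by (auto simp: subtopology_subtopology intro!: continuous_intros)
    then show "continuous_map (subtopology ?I {t \<in> topspace ?I. t \<le> 1/2}) Y (\<lambda>t. g (2*t))"
      using continuous_map_compose g unfolding pathin_def o_def by blast
    have "continuous_map (subtopology ?I {t \<in> topspace ?I. 1/2 \<le> t}) ?I (\<lambda>t. 2*t - 1)"
      by (auto simp: subtopology_subtopology intro!: continuous_intros)
    then show "continuous_map (subtopology ?I {t \<in> topspace ?I. 1/2 \<le> t}) Y (\<lambda>t. h (2*t - 1))"
      using continuous_map_compose h unfolding pathin_def o_def by blast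
  next
    fix t :: real assume t: "t = 1/2"
    show "g (2*t) = h (2*t - 1)" unfolding t using gh by simp
  qed simp_all
  then show ?thesis unfolding pathin_def join_path_def by simp
qed

lemma join_path_image:
  assumes "g 1 = h 0"
  shows "join_path g h ` K =
    g ` ((\<lambda>t. 2*t) ` (K \<inter> {..1/2})) \<union> h ` ((\<lambda>t. 2*t - 1) ` (K \<inter> {1/2..}))"
proof (intro equalityI subsetI)
  fix u assume "u \<in> join_path g h ` K"
  then obtain t where "t \<in> K" "u = join_path g h t" by blast
  then show "u \<in> g ` ((\<lambda>t. 2*t) ` (K \<inter> {..1/2})) \<union> h ` ((\<lambda>t. 2*t - 1) ` (K \<inter> {1/2..}))"
    by (cases "t \<le> 1/2") (auto simp: join_path_def)
next
  fix u assume "u \<in> g ` ((\<lambda>t. 2*t) ` (K \<inter> {..1/2})) \<union> h ` ((\<lambda>t. 2*t - 1) ` (K \<inter> {1/2..}))"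
  then consider t where "t \<in> K" "t \<le> 1/2" "u = g (2*t)" | t where "t \<in> K" "1/2 \<le> t" "u = h (2*t - 1)"
    by auto
  then show "u \<in> join_path g h ` K"
  proof cases
    case (1 t)
    then have "u = join_path g h t" by (simp add: join_path_def)
    then show ?thesis using \<open>t \<in> K\<close> by blast
  next
    case (2 t)
    have "u = join_path g h t"
    proof (cases "t = 1/2")
      case True
      then have "2*t = 1" "2*t - 1 = 0" by simp_all
      then show ?thesis using 2 assms unfolding join_path_def by (simp only:) simp
    qed (use 2 in \<open>simp add: join_path_def\<close>)
    then show ?thesis using \<open>t \<in> K\<close> by blast
  qed
qed

lemma openin_quotient_topology:
  "openin (quotient_topology X f) U \<longleftrightarrow>
     U \<subseteq> f ` topspace X \<and> openin X {x \<in> topspace X. f x \<in> U}"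
proof -
  have "istopology (\<lambda>U. U \<subseteq> f ` topspace X \<and> openin X {x \<in> topspace X. f x \<in> U})"
    unfolding istopology_def
  proof (rule conjI; intro allI impI)
    fix S T
    assume "S \<subseteq> f ` topspace X \<and> openin X {x \<in> topspace X. f x \<in> S}"
      and "T \<subseteq> f ` topspace X \<and> openin X {x \<in> topspace X. f x \<in> T}"
    moreover have "{x \<in> topspace X. f x \<in> S \<inter> T} =
        {x \<in> topspace X. f x \<in> S} \<inter> {x \<in> topspace X. f x \<in> T}"
      by auto
    ultimately show "S \<inter> T \<subseteq> f ` topspace X \<and> openin X {x \<in> topspace X. f x \<in> S \<inter> T}"
      by (auto intro!: openin_Int)
  next
    fix \<K> assume "\<forall>S\<in>\<K>. S \<subseteq> f ` topspace X \<and> openin X {x \<in> topspace X. f x \<in> S}"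
    moreover have "{x \<in> topspace X. f x \<in> \<Union>\<K>} = (\<Union>S\<in>\<K>. {x \<in> topspace X. f x \<in> S})"
      by auto
    ultimately show "\<Union>\<K> \<subseteq> f ` topspace X \<and> openin X {x \<in> topspace X. f x \<in> \<Union>\<K>}"
      by (auto intro!: openin_Union)
  qed
  then show ?thesis unfolding quotient_topology_def by simp
qed

lemma topspace_quotient_topology: "topspace (quotient_topology X f) = f ` topspace X"
proof (rule antisym)
  show "topspace (quotient_topology X f) \<subseteq> f ` topspace X"
    using openin_quotient_topology[of X f "topspace (quotient_topology X f)"] by simp
  have "{x \<in> topspace X. f x \<in> f ` topspace X} = topspace X"
    by auto
  then have "openin (quotient_topology X f) (f ` topspace X)"
    unfolding openin_quotient_topology by simp
  then show "f ` topspace X \<subseteq> topspace (quotient_topology X f)"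
    by (rule openin_subset)
qed

lemma openin_path_space_subbasic:
  assumes "compactin (top_of_set {0..1}) K" and "openin Y U"
  shows "openin (path_space Y) {p. pathin Y p \<and> p ` K \<subseteq> U}"
  unfolding path_space_def using assms by (intro topology_generated_by_Basis) blast

lemma path_space_open_induct [consumes 1, case_names empty Int Union subbasic]:
  assumes "openin (path_space Y) S"
    and "P {}"
    and "\<And>A B. P A \<Longrightarrow> P B \<Longrightarrow> P (A \<inter> B)"
    and "\<And>\<K>. (\<And>A. A \<in> \<K> \<Longrightarrow> P A) \<Longrightarrow> P (\<Union>\<K>)"
    and "\<And>K U. compactin (top_of_set {0..1}) K \<Longrightarrow> openin Y U \<Longrightarrow>
           P {p. pathin Y p \<and> p ` K \<subseteq> U}"
  shows "P S"
proof -
  have "generate_topology_on {{p. pathin Y p \<and> p ` K \<subseteq> U} | K U.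
          compactin (top_of_set {0..1}) K \<and> openin Y U} S"
    using assms(1) unfolding path_space_def by (simp add: openin_topology_generated_by_iff)
  then show ?thesis
  proof (induction rule: generate_topology_on.induct)
    case (Basis s)
    then show ?case using assms(5) by blast
  qed (use assms(2-4) in auto)
qed

lemma compactin_unit_interval: "compactin (top_of_set {0..1}) K \<longleftrightarrow> compact K \<and> K \<subseteq> {0..(1::real)}"
  by (simp add: compactin_subtopology)

lemma path_space_pullback:
  assumes maps: "\<And>q. pathin Y q \<Longrightarrow> pathin Z (\<Phi> q)"
    and subbasic: "\<And>K U. compactin (top_of_set {0..1}) K \<Longrightarrow> openin Z U \<Longrightarrow>
          openin (path_space Y) {q. pathin Y q \<and> \<Phi> q ` K \<subseteq> U}"
    and "openin (path_space Z) S"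
  shows "openin (path_space Y) {q. pathin Y q \<and> \<Phi> q \<in> S}"
  using assms(3)
proof (induction rule: path_space_open_induct)
  case empty
  then show ?case by simp
next
  case (Int A B)
  have "{q. pathin Y q \<and> \<Phi> q \<in> A \<inter> B} = {q. pathin Y q \<and> \<Phi> q \<in> A} \<inter> {q. pathin Y q \<and> \<Phi> q \<in> B}"
    by blast
  then show ?case using Int by (simp add: openin_Int)
next
  case (Union \<K>)
  have "{q. pathin Y q \<and> \<Phi> q \<in> \<Union>\<K>} = (\<Union>A\<in>\<K>. {q. pathin Y q \<and> \<Phi> q \<in> A})"
    by blast
  then show ?case using Union by (auto intro!: openin_Union)
next
  case (subbasic K U)
  have "{q. pathin Y q \<and> \<Phi> q \<in> {p. pathin Z p \<and> p ` K \<subseteq> U}} = {q. pathin Y q \<and> \<Phi> q ` K \<subseteq> U}"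
    using maps by blast
  then show ?case using subbasic.hyps by (simp add: assms(2))
qed

lemma path_space_compose:
  assumes f: "continuous_map Y Z f" and S: "openin (path_space Z) S"
  shows "openin (path_space Y) {q. pathin Y q \<and> f \<circ> q \<in> S}"
proof (rule path_space_pullback[OF _ _ S])
  show "pathin Z (f \<circ> q)" if "pathin Y q" for q
    using that f by (rule pathin_compose)
  fix K :: "real set" and U
  assume K: "compactin (top_of_set {0..1}) K" and U: "openin Z U"
  have "q ` K \<subseteq> topspace Y" if "pathin Y q" for q
    using path_image_subset_topspace[OF that] K unfolding compactin_unit_interval by blast
  then have "{q. pathin Y q \<and> (f \<circ> q) ` K \<subseteq> U} =
      {q. pathin Y q \<and> q ` K \<subseteq> {y \<in> topspace Y. f y \<in> U}}"
    by auto
  moreover have "openin Y {y \<in> topspace Y. f y \<in> U}"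
    using f U by (rule openin_continuous_map_preimage)
  ultimately show "openin (path_space Y) {q. pathin Y q \<and> (f \<circ> q) ` K \<subseteq> U}"
    using openin_path_space_subbasic[OF K] by simp
qed

text \<open>Reversal of paths is continuous: it maps the subbasic set for K to the one for 1 - K.\<close>
lemma path_space_reverse:
  assumes S: "openin (path_space Y) S"
  shows "openin (path_space Y) {q. pathin Y q \<and> reverse_path q \<in> S}"
proof (rule path_space_pullback[OF _ _ S])
  show "pathin Y (reverse_path q)" if "pathin Y q" for q
    using that by (rule pathin_reverse_path)
  fix K :: "real set" and U
  assume K: "compactin (top_of_set {0..1}) K" and U: "openin Y U"
  let ?K = "(\<lambda>t. 1 - t) ` K"
  have "compact ?K" "?K \<subseteq> {0..1}"
    using K unfolding compactin_unit_interval
    by (auto intro!: compact_continuous_image continuous_intros)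
  then have "compactin (top_of_set {0..1}) ?K"
    unfolding compactin_unit_interval by simp
  moreover have "reverse_path q ` K = q ` ?K" for q :: "real \<Rightarrow> 'a"
    by (auto simp: reverse_path_def image_iff)
  ultimately show "openin (path_space Y) {q. pathin Y q \<and> reverse_path q ` K \<subseteq> U}"
    using openin_path_space_subbasic[OF _ U] by simp
qed

text \<open>Rescaling the two halves of a compact parameter set gives compact parameter sets; with
  the image splitting above this reduces a subbasic condition on a concatenation to one on
  each factor.\<close>
lemma compactin_halves:
  fixes K :: "real set"
  assumes "compactin (top_of_set {0..1}) K"
  shows "compactin (top_of_set {0..1}) ((\<lambda>t. 2*t) ` (K \<inter> {..1/2}))"
    and "compactin (top_of_set {0..1}) ((\<lambda>t. 2*t - 1) ` (K \<inter> {1/2..}))"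
  using assms unfolding compactin_unit_interval
  by (auto intro!: compact_continuous_image compact_Int_closed continuous_intros)

lemma path_space_join:
  assumes "openin (path_space Y) S"
    and "pathin Y p" "pathin Y r" "p 1 = r 0" "join_path p r \<in> S"
  shows "\<exists>A C. openin (path_space Y) A \<and> openin (path_space Y) C \<and> p \<in> A \<and> r \<in> C \<and>
           (\<forall>q\<in>A. \<forall>s\<in>C. q 1 = s 0 \<longrightarrow> join_path q s \<in> S)"
  using assms
proof (induction arbitrary: p r rule: path_space_open_induct)
  case empty
  then show ?case by simp
next
  case (Int A B)
  obtain A1 C1 where 1: "openin (path_space Y) A1" "openin (path_space Y) C1" "p \<in> A1" "r \<in> C1"
      "\<forall>q\<in>A1. \<forall>s\<in>C1. q 1 = s 0 \<longrightarrow> join_path q s \<in> A"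
    using Int.IH(1)[of p r] Int.prems by blast
  obtain A2 C2 where 2: "openin (path_space Y) A2" "openin (path_space Y) C2" "p \<in> A2" "r \<in> C2"
      "\<forall>q\<in>A2. \<forall>s\<in>C2. q 1 = s 0 \<longrightarrow> join_path q s \<in> B"
    using Int.IH(2)[of p r] Int.prems by blast
  show ?case
    by (rule exI[of _ "A1 \<inter> A2"], rule exI[of _ "C1 \<inter> C2"]) (use 1 2 in \<open>auto intro: openin_Int\<close>)
next
  case (Union \<K>)
  then obtain A where "A \<in> \<K>" "join_path p r \<in> A" by blast
  then show ?case using Union.IH[of A p r] Union.prems by blast
next
  case (subbasic K U)
  let ?K1 = "(\<lambda>t. 2*t) ` (K \<inter> {..1/2})" and ?K2 = "(\<lambda>t. 2*t - 1) ` (K \<inter> {1/2..})"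
  let ?A = "{q. pathin Y q \<and> q ` ?K1 \<subseteq> U}" and ?C = "{s. pathin Y s \<and> s ` ?K2 \<subseteq> U}"
  show ?case
  proof (intro exI conjI)
    show "openin (path_space Y) ?A" "openin (path_space Y) ?C"
      using subbasic.hyps by (auto intro!: openin_path_space_subbasic compactin_halves)
    show "p \<in> ?A" "r \<in> ?C"
      using subbasic.prems join_path_image[of p r K] by auto
    show "\<forall>q\<in>?A. \<forall>s\<in>?C. q 1 = s 0 \<longrightarrow> join_path q s \<in> {p. pathin Y p \<and> p ` K \<subseteq> U}"
    proof (intro ballI impI)
      fix q s assume "q \<in> ?A" "s \<in> ?C" "q 1 = s 0"
      then show "join_path q s \<in> {p. pathin Y p \<and> p ` K \<subseteq> U}"
        using join_path_image[of q s K] pathin_join_path[of Y q s] by auto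
    qed
  qed
qed

definition well_started :: "'a topology \<Rightarrow> (real \<Rightarrow> 'a) \<Rightarrow> bool" where
  "well_started Y p \<longleftrightarrow> pathin Y p \<and>
     (\<forall>\<U>. openin (path_space Y) \<U> \<and> p \<in> \<U> \<longrightarrow>
        (\<exists>V0. openin Y V0 \<and> p 0 \<in> V0 \<and> (\<forall>a\<in>V0. \<exists>q\<in>\<U>. q 0 = a \<and> q 1 = p 1)))"

lemma well_ended_imp_well_started: "well_ended Y p \<Longrightarrow> well_started Y p"
  unfolding well_ended_def well_started_def by meson

text \<open>The reverse of a well-ended path is well-ended, by continuity of reversal.\<close>
lemma well_ended_reverse_path:
  assumes p: "well_ended Y p"
  shows "well_ended Y (reverse_path p)"
  unfolding well_ended_def
proof (intro conjI allI impI)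
  show "pathin Y (reverse_path p)"
    using p unfolding well_ended_def by (simp add: pathin_reverse_path)
  fix \<U> assume \<U>: "openin (path_space Y) \<U> \<and> reverse_path p \<in> \<U>"
  let ?\<U> = "{q. pathin Y q \<and> reverse_path q \<in> \<U>}"
  have "openin (path_space Y) ?\<U>" "p \<in> ?\<U>"
    using \<U> p path_space_reverse unfolding well_ended_def by auto
  then obtain V0 V1 where V: "openin Y V0" "p 0 \<in> V0" "openin Y V1" "p 1 \<in> V1"
      "\<forall>a\<in>V0. \<forall>b\<in>V1. \<exists>q\<in>?\<U>. q 0 = a \<and> q 1 = b"
    using p unfolding well_ended_def by blast
  show "\<exists>V0 V1. openin Y V0 \<and> reverse_path p 0 \<in> V0 \<and> openin Y V1 \<and> reverse_path p 1 \<in> V1 \<and>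
           (\<forall>a\<in>V0. \<forall>b\<in>V1. \<exists>q\<in>\<U>. q 0 = a \<and> q 1 = b)"
  proof (intro exI conjI ballI)
    show "openin Y V1" "openin Y V0" "reverse_path p 0 \<in> V1" "reverse_path p 1 \<in> V0"
      using V by (auto simp: reverse_path_def)
    fix a b assume "a \<in> V1" "b \<in> V0"
    then obtain q where "q \<in> ?\<U>" "q 0 = b" "q 1 = a"
      using V(5) by blast
    then show "\<exists>q\<in>\<U>. q 0 = a \<and> q 1 = b"
      by (intro bexI[of _ "reverse_path q"]) (auto simp: reverse_path_def)
  qed
qed

text \<open>A well-started path followed by a well-ended path is well-ended, by continuity of
  concatenation: the perturbed start is joined to the fixed middle point, and from there to
  the perturbed end.\<close>
lemma well_ended_join_path:
  assumes p: "well_started Y p" and r: "well_ended Y r" and pr: "p 1 = r 0"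
  shows "well_ended Y (join_path p r)"
  unfolding well_ended_def
proof (intro conjI allI impI)
  have "pathin Y p" "pathin Y r"
    using p r unfolding well_started_def well_ended_def by auto
  then show "pathin Y (join_path p r)"
    using pr by (rule pathin_join_path)
  fix \<U> assume \<U>: "openin (path_space Y) \<U> \<and> join_path p r \<in> \<U>"
  obtain A C where AC: "openin (path_space Y) A" "openin (path_space Y) C" "p \<in> A" "r \<in> C"
      "\<forall>q\<in>A. \<forall>s\<in>C. q 1 = s 0 \<longrightarrow> join_path q s \<in> \<U>"
    using path_space_join[of Y \<U> p r] \<U> \<open>pathin Y p\<close> \<open>pathin Y r\<close> pr by blast
  obtain V0 where V0: "openin Y V0" "p 0 \<in> V0" "\<forall>a\<in>V0. \<exists>q\<in>A. q 0 = a \<and> q 1 = p 1"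
    using p AC unfolding well_started_def by blast
  obtain W0 W1 where W: "openin Y W0" "r 0 \<in> W0" "openin Y W1" "r 1 \<in> W1"
      "\<forall>a\<in>W0. \<forall>b\<in>W1. \<exists>s\<in>C. s 0 = a \<and> s 1 = b"
    using r AC unfolding well_ended_def by blast
  show "\<exists>V0 V1. openin Y V0 \<and> join_path p r 0 \<in> V0 \<and> openin Y V1 \<and> join_path p r 1 \<in> V1 \<and>
           (\<forall>a\<in>V0. \<forall>b\<in>V1. \<exists>q\<in>\<U>. q 0 = a \<and> q 1 = b)"
  proof (intro exI conjI ballI)
    show "openin Y V0" "openin Y W1" "join_path p r 0 \<in> V0" "join_path p r 1 \<in> W1"
      using V0 W by (auto simp: join_path_def)
    fix a b assume "a \<in> V0" "b \<in> W1"
    then obtain q s where "q \<in> A" "q 0 = a" "q 1 = p 1" "s \<in> C" "s 0 = p 1" "s 1 = b"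
      using V0(3) W(2,5) pr by fastforce
    then show "\<exists>q\<in>\<U>. q 0 = a \<and> q 1 = b"
      using AC(5) by (intro bexI[of _ "join_path q s"]) (auto simp: join_path_def)
  qed
qed

lemma path_space_open_const:
  assumes "openin (path_space Y) S" and "(\<lambda>_. c) \<in> S" and "c \<in> topspace Y"
  shows "\<exists>N. openin Y N \<and> c \<in> N \<and> (\<forall>q. pathin Y q \<and> q ` {0..1} \<subseteq> N \<longrightarrow> q \<in> S)"
  using assms
proof (induction rule: path_space_open_induct)
  case empty
  then show ?case by simp
next
  case (Int A B)
  obtain N1 where "openin Y N1" "c \<in> N1" "\<forall>q. pathin Y q \<and> q ` {0..1} \<subseteq> N1 \<longrightarrow> q \<in> A"
    using Int.IH(1) Int.prems by blast
  moreover obtain N2 where "openin Y N2" "c \<in> N2" "\<forall>q. pathin Y q \<and> q ` {0..1} \<subseteq> N2 \<longrightarrow> q \<in> B"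
    using Int.IH(2) Int.prems by blast
  ultimately show ?case
    by (intro exI[of _ "N1 \<inter> N2"]) auto
next
  case (Union \<K>)
  then obtain A where "A \<in> \<K>" "(\<lambda>_. c) \<in> A" by blast
  then show ?case using Union.IH[of A] Union.prems by blast
next
  case (subbasic K U)
  have "K \<subseteq> {0..1}"
    using subbasic.hyps(1) unfolding compactin_unit_interval by auto
  show ?case
  proof (cases "K = {}")
    case True
    then show ?thesis using subbasic.prems by (intro exI[of _ "topspace Y"]) auto
  next
    case False
    then have "c \<in> U" using subbasic.prems by auto
    then show ?thesis using subbasic.hyps(2) \<open>K \<subseteq> {0..1}\<close> by (intro exI[of _ U]) auto
  qed
qed

text \<open>The constant path at a point where the space is (weakly) locally path-connected is
  well-ended: nearby points are joined by short paths close to the constant one.\<close>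
lemma well_ended_const:
  assumes c: "c \<in> topspace Y" and lpc: "weakly_locally_path_connected_at c Y"
  shows "well_ended Y (\<lambda>_. c)"
  unfolding well_ended_def
proof (intro conjI allI impI)
  show "pathin Y (\<lambda>_. c)" using c by simp
  fix \<U> assume \<U>: "openin (path_space Y) \<U> \<and> (\<lambda>_. c) \<in> \<U>"
  then obtain N where N: "openin Y N" "c \<in> N" "\<forall>q. pathin Y q \<and> q ` {0..1} \<subseteq> N \<longrightarrow> q \<in> \<U>"
    using path_space_open_const[of Y \<U> c] c by blast
  obtain U V where UV: "openin Y U" "path_connectedin Y V" "c \<in> U" "U \<subseteq> V" "V \<subseteq> N"
    using lpc[unfolded weakly_locally_path_connected_at_def neighbourhood_base_at_def, rule_format, OF conjI[OF N(1,2)]]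
    by blast
  show "\<exists>V0 V1. openin Y V0 \<and> c \<in> V0 \<and> openin Y V1 \<and> c \<in> V1 \<and>
           (\<forall>a\<in>V0. \<forall>b\<in>V1. \<exists>q\<in>\<U>. q 0 = a \<and> q 1 = b)"
  proof (intro exI conjI ballI)
    fix a b assume "a \<in> U" "b \<in> U"
    then obtain q where q: "pathin Y q" "q \<in> {0..1} \<rightarrow> V" "q 0 = a" "q 1 = b"
      using UV(2,4) unfolding path_connectedin by blast
    then have "q ` {0..1} \<subseteq> N"
      using UV(5) by auto
    then show "\<exists>q\<in>\<U>. q 0 = a \<and> q 1 = b"
      using N(3) q by blast
  qed (use UV in simp_all)
qed

abbreviation wedge_inclusion :: "('i \<Rightarrow> 'a) \<Rightarrow> 'i \<Rightarrow> 'a \<Rightarrow> ('i \<times> 'a) option" where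
  "wedge_inclusion x l \<equiv> \<lambda>y. wedge_map x (l, y)"

lemma wedge_map_eq: "wedge_map x (l, y) = (if y = x l then None else Some (l, y))"
  by (simp add: wedge_map_def)

lemma topspace_wedge: "topspace (wedge X x \<Lambda>) = wedge_map x ` Sigma \<Lambda> (topspace \<circ> X)"
  unfolding wedge_def topspace_quotient_topology by simp

lemma openin_wedge:
  "openin (wedge X x \<Lambda>) U \<longleftrightarrow> U \<subseteq> topspace (wedge X x \<Lambda>) \<and>
     (\<forall>l\<in>\<Lambda>. openin (X l) {y \<in> topspace (X l). wedge_inclusion x l y \<in> U})"
proof -
  have "{y. (l, y) \<in> {z \<in> Sigma \<Lambda> (topspace \<circ> X). wedge_map x z \<in> U}} =
      {y \<in> topspace (X l). wedge_inclusion x l y \<in> U}" if "l \<in> \<Lambda>" for l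
    using that by auto
  then show ?thesis
    unfolding topspace_wedge
    unfolding wedge_def openin_quotient_topology openin_sum_topology topspace_sum_topology
    by auto
qed

lemma continuous_map_wedge_inclusion:
  assumes "l \<in> \<Lambda>"
  shows "continuous_map (X l) (wedge X x \<Lambda>) (wedge_inclusion x l)"
  unfolding continuous_map_def
proof (intro conjI allI impI)
  show "wedge_inclusion x l \<in> topspace (X l) \<rightarrow> topspace (wedge X x \<Lambda>)"
    unfolding topspace_wedge using assms by auto
  fix U assume "openin (wedge X x \<Lambda>) U"
  then show "openin (X l) {y \<in> topspace (X l). wedge_inclusion x l y \<in> U}"
    using assms unfolding openin_wedge by blast
qed

lemma openin_wedge_Union:
  assumes U: "\<And>l. l \<in> \<Lambda> \<Longrightarrow> openin (X l) (U l)"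
    and base: "(\<forall>l\<in>\<Lambda>. x l \<in> U l) \<or> (\<forall>l\<in>\<Lambda>. x l \<notin> U l)"
  shows "openin (wedge X x \<Lambda>) (\<Union>l\<in>\<Lambda>. wedge_inclusion x l ` U l)"
  unfolding openin_wedge
proof (intro conjI ballI)
  have "wedge_inclusion x l ` U l \<subseteq> topspace (wedge X x \<Lambda>)" if "l \<in> \<Lambda>" for l
    using image_mono[OF openin_subset[OF U[OF that]]]
      continuous_map_image_subset_topspace[OF continuous_map_wedge_inclusion[OF that]]
    by (rule order_trans)
  then show "(\<Union>l\<in>\<Lambda>. wedge_inclusion x l ` U l) \<subseteq> topspace (wedge X x \<Lambda>)"
    by blast
  fix m assume m: "m \<in> \<Lambda>"
  have "{y \<in> topspace (X m). wedge_inclusion x m y \<in> (\<Union>l\<in>\<Lambda>. wedge_inclusion x l ` U l)} = U m"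
    using base m openin_subset[OF U[OF m]] by (auto simp: wedge_map_eq split: if_splits)
  then show "openin (X m) {y \<in> topspace (X m). wedge_inclusion x m y \<in> (\<Union>l\<in>\<Lambda>. wedge_inclusion x l ` U l)}"
    using U[OF m] by simp
qed

text \<open>A well-ended path in a summand that does not start at the basepoint becomes well-started
  in the wedge: since the basepoint is closed, the starting neighbourhood can be shrunk to
  miss the basepoint, and then it stays open in the wedge. (The end may be the basepoint,
  where the wedge is no longer locally like the summand.)\<close>
lemma well_started_wedge_inclusion:
  assumes l: "l \<in> \<Lambda>" and p: "well_ended (X l) p" and p0: "p 0 \<noteq> x l"
    and closed: "closedin (X l) {x l}"
  shows "well_started (wedge X x \<Lambda>) (wedge_inclusion x l \<circ> p)"
  unfolding well_started_def
proof (intro conjI allI impI)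
  let ?W = "wedge X x \<Lambda>" and ?i = "wedge_inclusion x l"
  have incl: "continuous_map (X l) ?W ?i"
    using l by (rule continuous_map_wedge_inclusion)
  have "pathin (X l) p"
    using p unfolding well_ended_def by simp
  then show "pathin ?W (?i \<circ> p)"
    using incl by (rule pathin_compose)
  fix \<U> assume \<U>: "openin (path_space ?W) \<U> \<and> ?i \<circ> p \<in> \<U>"
  let ?\<U> = "{q. pathin (X l) q \<and> ?i \<circ> q \<in> \<U>}"
  have "openin (path_space (X l)) ?\<U>" "p \<in> ?\<U>"
    using path_space_compose[OF incl] \<U> \<open>pathin (X l) p\<close> by auto
  then obtain V0 V1 where V: "openin (X l) V0" "p 0 \<in> V0" "p 1 \<in> V1"
      "\<forall>a\<in>V0. \<forall>b\<in>V1. \<exists>q\<in>?\<U>. q 0 = a \<and> q 1 = b"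
    using p unfolding well_ended_def by blast
  define U where "U m = (if m = l then V0 - {x l} else {})" for m
  show "\<exists>V. openin ?W V \<and> (?i \<circ> p) 0 \<in> V \<and> (\<forall>a\<in>V. \<exists>q\<in>\<U>. q 0 = a \<and> q 1 = (?i \<circ> p) 1)"
  proof (intro exI conjI ballI)
    show "openin ?W (\<Union>m\<in>\<Lambda>. wedge_inclusion x m ` U m)"
      using V(1) closed by (intro openin_wedge_Union) (auto simp: U_def)
    show "(?i \<circ> p) 0 \<in> (\<Union>m\<in>\<Lambda>. wedge_inclusion x m ` U m)"
      using l V(2) p0 by (auto simp: U_def)
    fix a assume "a \<in> (\<Union>m\<in>\<Lambda>. wedge_inclusion x m ` U m)"
    then obtain v where v: "v \<in> V0" "a = ?i v"
      by (auto simp: U_def split: if_splits)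
    then obtain q where "q \<in> ?\<U>" "q 0 = v" "q 1 = p 1"
      using V(3,4) by blast
    then show "\<exists>q\<in>\<U>. q 0 = a \<and> q 1 = (?i \<circ> p) 1"
      using v by (intro bexI[of _ "?i \<circ> q"]) auto
  qed
qed

lemma locally_path_connected_at_imp_weakly:
  "locally_path_connected_at x X \<Longrightarrow> weakly_locally_path_connected_at x X"
  unfolding locally_path_connected_at_def weakly_locally_path_connected_at_def
  by (erule neighbourhood_base_at_mono) simp

text \<open>The wedge is weakly locally path-connected at the wedge point if every summand is so at
  its basepoint: glue the small open neighbourhoods of the basepoints, and connect each point
  to the wedge point inside the image of a path-connected neighbourhood in its summand.\<close>
lemma weakly_locally_path_connected_at_wedge:
  assumes base: "\<And>l. l \<in> \<Lambda> \<Longrightarrow> x l \<in> topspace (X l)"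
    and lpc: "\<And>l. l \<in> \<Lambda> \<Longrightarrow> weakly_locally_path_connected_at (x l) (X l)"
  shows "weakly_locally_path_connected_at None (wedge X x \<Lambda>)"
  unfolding weakly_locally_path_connected_at
proof (intro allI impI)
  let ?W = "wedge X x \<Lambda>"
  fix N assume N: "openin ?W N \<and> None \<in> N"
  have "\<forall>l\<in>\<Lambda>. \<exists>U V. openin (X l) U \<and> path_connectedin (X l) V \<and> x l \<in> U \<and> U \<subseteq> V \<and>
          V \<subseteq> {y \<in> topspace (X l). wedge_inclusion x l y \<in> N}"
  proof
    fix l assume l: "l \<in> \<Lambda>"
    have "openin (X l) {y \<in> topspace (X l). wedge_inclusion x l y \<in> N}"
      using N l unfolding openin_wedge by blast
    moreover have "x l \<in> {y \<in> topspace (X l). wedge_inclusion x l y \<in> N}"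
      using N base[OF l] by (simp add: wedge_map_eq)
    ultimately show "\<exists>U V. openin (X l) U \<and> path_connectedin (X l) V \<and> x l \<in> U \<and> U \<subseteq> V \<and>
          V \<subseteq> {y \<in> topspace (X l). wedge_inclusion x l y \<in> N}"
      using lpc[OF l, unfolded weakly_locally_path_connected_at_def neighbourhood_base_at_def]
      by blast
  qed
  from bchoice[OF this] obtain U where "\<forall>l\<in>\<Lambda>. \<exists>V. openin (X l) (U l) \<and> path_connectedin (X l) V \<and>
      x l \<in> U l \<and> U l \<subseteq> V \<and> V \<subseteq> {y \<in> topspace (X l). wedge_inclusion x l y \<in> N}" ..
  from bchoice[OF this] obtain V where "\<forall>l\<in>\<Lambda>. openin (X l) (U l) \<and> path_connectedin (X l) (V l) \<and>
      x l \<in> U l \<and> U l \<subseteq> V l \<and> V l \<subseteq> {y \<in> topspace (X l). wedge_inclusion x l y \<in> N}" ..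
  then have UV: "\<And>l. l \<in> \<Lambda> \<Longrightarrow> openin (X l) (U l) \<and> path_connectedin (X l) (V l) \<and>
      x l \<in> U l \<and> U l \<subseteq> V l \<and> V l \<subseteq> {y \<in> topspace (X l). wedge_inclusion x l y \<in> N}"
    by blast
  show "\<exists>U'. openin ?W U' \<and> None \<in> U' \<and> U' \<subseteq> N \<and>
          (\<forall>y\<in>U'. \<exists>C. path_connectedin ?W C \<and> C \<subseteq> N \<and> None \<in> C \<and> y \<in> C)"
  proof (rule exI[of _ "\<Union>l\<in>\<Lambda>. wedge_inclusion x l ` U l"], intro conjI ballI)
    show "openin ?W (\<Union>l\<in>\<Lambda>. wedge_inclusion x l ` U l)"
      using UV by (intro openin_wedge_Union) auto
    have "None \<in> topspace ?W"
      using N openin_subset[of ?W N] by blast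
    then obtain l where "l \<in> \<Lambda>"
      unfolding topspace_wedge by auto
    then show "None \<in> (\<Union>l\<in>\<Lambda>. wedge_inclusion x l ` U l)"
      using UV by (force simp: wedge_map_eq)
    show "(\<Union>l\<in>\<Lambda>. wedge_inclusion x l ` U l) \<subseteq> N"
      using UV by blast
    fix y assume "y \<in> (\<Union>l\<in>\<Lambda>. wedge_inclusion x l ` U l)"
    then obtain l where l: "l \<in> \<Lambda>" "y \<in> wedge_inclusion x l ` U l"
      by blast
    show "\<exists>C. path_connectedin ?W C \<and> C \<subseteq> N \<and> None \<in> C \<and> y \<in> C"
    proof (rule exI[of _ "wedge_inclusion x l ` V l"], intro conjI)
      show "path_connectedin ?W (wedge_inclusion x l ` V l)"
        using UV[OF l(1)] continuous_map_wedge_inclusion[OF l(1)]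
        by (blast intro: path_connectedin_continuous_map_image)
      show "wedge_inclusion x l ` V l \<subseteq> N" "y \<in> wedge_inclusion x l ` V l"
        using UV[OF l(1)] l(2) by blast+
      show "None \<in> wedge_inclusion x l ` V l"
        using UV[OF l(1)] by (force simp: wedge_map_eq)
    qed
  qed
qed

text \<open>A space is wep-connected as soon as every point is joined to one fixed point c by a
  well-ended path: go from a to c and back along the reversed path to b.\<close>
lemma wep_connected_via_point:
  assumes "\<And>a. a \<in> topspace Y \<Longrightarrow> \<exists>p. well_ended Y p \<and> p 0 = a \<and> p 1 = c"
  shows "wep_connected Y"
  unfolding wep_connected_def
proof (intro ballI)
  fix a b assume "a \<in> topspace Y" "b \<in> topspace Y"
  then obtain p r where p: "well_ended Y p" "p 0 = a" "p 1 = c"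
    and r: "well_ended Y r" "r 0 = b" "r 1 = c"
    using assms by meson
  have "well_ended Y (join_path p (reverse_path r))"
    using well_ended_imp_well_started[OF p(1)] well_ended_reverse_path[OF r(1)]
    by (rule well_ended_join_path) (simp add: p r reverse_path_def)
  moreover have "join_path p (reverse_path r) 0 = a" "join_path p (reverse_path r) 1 = b"
    using p r by (simp_all add: join_path_def reverse_path_def)
  ultimately show "\<exists>q. well_ended Y q \<and> q 0 = a \<and> q 1 = b"
    by blast
qed

text \<open>Every point of the wedge is joined to the wedge point by a well-ended path: push a
  well-ended path to the basepoint of the summand into the wedge and append the constant
  path at the wedge point.\<close>
lemma wedge_well_ended_path_to_basepoint:
  assumes l: "l \<in> \<Lambda>" and y: "y \<in> topspace (X l)"
    and base: "x l \<in> topspace (X l)" and wep: "wep_connected (X l)"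
    and closed: "closedin (X l) {x l}"
    and const: "well_ended (wedge X x \<Lambda>) (\<lambda>_. None)"
  shows "\<exists>P. well_ended (wedge X x \<Lambda>) P \<and> P 0 = wedge_inclusion x l y \<and> P 1 = None"
proof (cases "y = x l")
  case True
  then show ?thesis
    using const by (intro exI[of _ "\<lambda>_. None"]) (simp add: wedge_map_eq)
next
  case False
  obtain p where p: "well_ended (X l) p" "p 0 = y" "p 1 = x l"
    using wep y base unfolding wep_connected_def by blast
  let ?P = "join_path (wedge_inclusion x l \<circ> p) (\<lambda>_. None)"
  have "well_started (wedge X x \<Lambda>) (wedge_inclusion x l \<circ> p)"
    using l p(1) closed False p(2) by (intro well_started_wedge_inclusion) auto
  then have "well_ended (wedge X x \<Lambda>) ?P"
    using const by (rule well_ended_join_path) (simp add: p(3) wedge_map_eq)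
  moreover have "?P 0 = wedge_inclusion x l y" "?P 1 = None"
    using p by (simp_all add: join_path_def)
  ultimately show ?thesis
    by blast
qed

theorem lemma4p21:
  fixes X :: "'i \<Rightarrow> 'a topology" and x :: "'i \<Rightarrow> 'a" and \<Lambda> :: "'i set"
  assumes "\<And>l. l \<in> \<Lambda> \<Longrightarrow> x l \<in> topspace (X l)"
    and "\<And>l. l \<in> \<Lambda> \<Longrightarrow> wep_connected (X l)"
    and "\<And>l. l \<in> \<Lambda> \<Longrightarrow> locally_path_connected_at (x l) (X l)"
    and "\<And>l. l \<in> \<Lambda> \<Longrightarrow> closedin (X l) {x l}"
  shows "wep_connected (wedge X x \<Lambda>)"
proof (rule wep_connected_via_point)
  fix a assume "a \<in> topspace (wedge X x \<Lambda>)"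
  then obtain l y where l: "l \<in> \<Lambda>" and y: "y \<in> topspace (X l)" and a: "a = wedge_inclusion x l y"
    unfolding topspace_wedge by auto
  have "None \<in> topspace (wedge X x \<Lambda>)"
    using continuous_map_image_subset_topspace[OF continuous_map_wedge_inclusion[OF l]] assms(1)[OF l]
    by (force simp: wedge_map_eq)
  moreover have "weakly_locally_path_connected_at None (wedge X x \<Lambda>)"
    using assms(1) locally_path_connected_at_imp_weakly[OF assms(3)]
    by (rule weakly_locally_path_connected_at_wedge)
  ultimately have "well_ended (wedge X x \<Lambda>) (\<lambda>_. None)"
    by (rule well_ended_const)
  then show "\<exists>P. well_ended (wedge X x \<Lambda>) P \<and> P 0 = a \<and> P 1 = None"
    unfolding a using l y assms(1,2,4) by (intro wedge_well_ended_path_to_basepoint) auto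
qed

end
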